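(* Let $A=C(X)$ be the commutative unital C*-algebra of continuous functions on a compact Hausdorff space $X$. For any finitely generated Hilbert $A$-module $\mathcal H$ and any standard normalized tight frame $\{y_j : j\in\mathbb J\}$ of $\mathcal H$, the sum $\sum_j\langle y_j,y_j\rangle$ (converging weakly, i.e. in the weak* topology of the bidual $A^{**}$) is a continuous function on $X$ taking constant non-negative integer values on closed-open subsets of $X$. This limit does not depend on the choice of the standard normalized tight frame of $\mathcal H$.
   Context: A (left) Hilbert $A$-module is a left $A$-module $\mathcal H$ with an $A$-valued inner product $\langle\cdot,\cdot\rangle$, $A$-linear in the first argument, with $\langle x,y\rangle=\langle y,x\rangle^*$, $\langle x,x\rangle\ge0$ and $=0$ only for $x=0$, complete in $\|x\|=\|\langle x,x\rangle\|^{1/2}$. It is finitely generated if every element is an $A$-linear combination of finitely many fixed elements. A sequence $\{y_j:j\in\mathbb J\}$ ($\mathbb J$ finite or countable) is a normalized tight frame if $\langle x,x\rangle=\sum_j\langle x,y_j\rangle\langle y_j,x\rangle$ for all $x\in\mathcal H$, and standard if this series converges in norm for every $x$. *)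

theory Defs
  imports "HOL-Analysis.Analysis"
begin

text \<open>The algebra A = C(X): continuous complex-valued functions on the
  (compact Hausdorff) space given by the type 'x.\<close>

definition cx :: "('x::topological_space \<Rightarrow> complex) \<Rightarrow> bool" where
  "cx a \<longleftrightarrow> continuous_on UNIV a"

definition hilbert_CX_module ::
  "(('x::topological_space \<Rightarrow> complex) \<Rightarrow> 'h::ab_group_add \<Rightarrow> 'h) \<Rightarrow>
   ('h \<Rightarrow> 'h \<Rightarrow> ('x \<Rightarrow> complex)) \<Rightarrow> bool" where
  "hilbert_CX_module sm ip \<longleftrightarrow>
     \<comment> \<open>left A-module axioms\<close>
     (\<forall>a x y. cx a \<longrightarrow> sm a (x + y) = sm a x + sm a y) \<and>
     (\<forall>a b x. cx a \<longrightarrow> cx b \<longrightarrow> sm (\<lambda>t. a t + b t) x = sm a x + sm b x) \<and>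
     (\<forall>a b x. cx a \<longrightarrow> cx b \<longrightarrow> sm (\<lambda>t. a t * b t) x = sm a (sm b x)) \<and>
     (\<forall>x. sm (\<lambda>t. 1) x = x) \<and>
     \<comment> \<open>A-valued inner product\<close>
     (\<forall>x y. cx (ip x y)) \<and>
     (\<forall>a x y. cx a \<longrightarrow> ip (sm a x) y = (\<lambda>t. a t * ip x y t)) \<and>
     (\<forall>x z y. ip (x + z) y = (\<lambda>t. ip x y t + ip z y t)) \<and>
     (\<forall>x y t. ip x y t = cnj (ip y x t)) \<and>
     (\<forall>x t. ip x x t \<in> \<real> \<and> 0 \<le> Re (ip x x t)) \<and>
     (\<forall>x. ip x x = (\<lambda>t. 0) \<longrightarrow> x = 0) \<and>
     \<comment> \<open>completeness in the norm sqrt of sup-norm of ip x x\<close>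
     (\<forall>s :: nat \<Rightarrow> 'h.
        (\<forall>e>0. \<exists>N. \<forall>m\<ge>N. \<forall>n\<ge>N. \<forall>t. norm (ip (s m - s n) (s m - s n) t) < e) \<longrightarrow>
        (\<exists>l. \<forall>e>0. \<exists>N. \<forall>n\<ge>N. \<forall>t. norm (ip (s n - l) (s n - l) t) < e))"

definition finitely_generated_CX ::
  "(('x::topological_space \<Rightarrow> complex) \<Rightarrow> 'h::ab_group_add \<Rightarrow> 'h) \<Rightarrow> bool" where
  "finitely_generated_CX sm \<longleftrightarrow>
     (\<exists>G. finite G \<and> (\<forall>x. \<exists>c. (\<forall>g\<in>G. cx (c g)) \<and> x = (\<Sum>g\<in>G. sm (c g) g)))"

text \<open>Standard normalized tight frame indexed by a finite or countable index set
  J (a subset of nat): for every x the series of \<langle>x,y_j\<rangle>\<langle>y_j,x\<rangle> converges in the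
  norm of C(X) (uniformly on X) to \<langle>x,x\<rangle>.\<close>

definition std_nt_frame ::
  "('h::ab_group_add \<Rightarrow> 'h \<Rightarrow> ('x::topological_space \<Rightarrow> complex)) \<Rightarrow> nat set \<Rightarrow> (nat \<Rightarrow> 'h) \<Rightarrow> bool" where
  "std_nt_frame ip J y \<longleftrightarrow>
     (\<forall>x. uniform_limit UNIV
            (\<lambda>n t. \<Sum>j\<in>J \<inter> {..<n}. ip x (y j) t * ip (y j) x t)
            (ip x x) sequentially)"

end

theory Submission
  imports Defs
begin

(* For every point s, the inner product evaluated at s is a
   positive hermitian form on H; the fibre at s (H modulo the null vectors of this form) is
   spanned by the images of G, and we let d(s) be its dimension, the largest size of a family
   that is orthonormal at s.  Evaluating the frame identity on an orthonormal basis of the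
   fibre and applying Parseval's identity there gives sum_j <y_j, y_j>(s) = d(s) for every
   frame, which is the independence statement.

   For continuity, H is complete in the norm sup_t <x, x>(t)^(1/2), and it is covered by the
   countably many sets of combinations of G with coefficient functions bounded by k.  Baire's
   theorem therefore yields one constant K such that every unit vector of every fibre is
   approximated by combinations of G with constant coefficients bounded by K.  With this, the
   distance of the N-th partial sum of sum_j <y_j, y_j> from d is controlled, uniformly in s,
   by the remainders of the frame expansions of the finitely many generators, which tend to 0
   uniformly.  So d is a uniform limit of continuous functions; being integer-valued, it is
   constant on clopen sets. *)

lemma clopen_level_sets_of_nat_valued:
  fixes f :: "'a::topological_space \<Rightarrow> complex"
  assumes cont: "continuous_on UNIV f" and nat: "\<And>t. f t \<in> \<nat>"
  shows "open {t. f t = of_nat k}" and "closed {t. f t = of_nat k}"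
proof -
  have "{t. f t = of_nat k} = f -` ball (of_nat k) (1/2)"
  proof (intro set_eqI iffI)
    fix t assume "t \<in> f -` ball (of_nat k) (1/2)"
    moreover obtain m where m: "f t = of_nat m" using nat[of t] by (rule Nats_cases)
    moreover have "dist (of_nat m :: complex) (of_nat k) = \<bar>real m - real k\<bar>"
      by (metis dist_real_def dist_of_real of_real_of_nat_eq)
    ultimately have "\<bar>real m - real k\<bar> < 1/2" by (simp add: dist_commute)
    then have "m = k" by linarith
    then show "t \<in> {t. f t = of_nat k}" using m by simp
  qed simp
  then show "open {t. f t = of_nat k}" using cont by (simp add: open_vimage)
  show "closed {t. f t = of_nat k}" using cont by (rule closed_Collect_eq) simp
qed

section \<open>Positive hermitian forms\<close>

lemma quadratic_nonneg_imp_le: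
  fixes A P C :: real
  assumes quad: "\<And>r. 0 \<le> A - 2 * r * P + r\<^sup>2 * P * C" and "0 \<le> C"
  shows "P \<le> A * C"
proof (cases "C = 0")
  case True
  have "P \<le> 0"
  proof (rule ccontr)
    assume "\<not> P \<le> 0"
    then have "A - 2 * ((A + 1) / (2 * P)) * P + ((A + 1) / (2 * P))\<^sup>2 * P * C = -1"
      using True by (simp add: field_simps)
    then show False using quad[of "(A + 1) / (2 * P)"] by simp
  qed
  then show ?thesis using True by simp
next
  case False
  then have "A - 2 * (1 / C) * P + (1 / C)\<^sup>2 * P * C = A - P / C"
    by (simp add: field_simps power2_eq_square)
  then have "P / C \<le> A" using quad[of "1 / C"] by simp
  then show ?thesis using False \<open>0 \<le> C\<close> by (simp add: field_simps)
qed

locale hermitian_form =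
  fixes scale :: "complex \<Rightarrow> 'v::ab_group_add \<Rightarrow> 'v"
    and b :: "'v \<Rightarrow> 'v \<Rightarrow> complex"
  assumes add_left: "b (x + y) z = b x z + b y z"
    and scale_left: "b (scale a x) z = a * b x z"
    and hermitian: "b x z = cnj (b z x)"
    and nonneg: "0 \<le> Re (b x x)"
begin

lemma add_right: "b x (y + z) = b x y + b x z"
  by (metis add_left complex_cnj_add hermitian)

lemma scale_right: "b x (scale a z) = cnj a * b x z"
  by (metis complex_cnj_mult hermitian scale_left)

lemma zero_left: "b 0 z = 0"
  using add_left[of 0 0 z] by simp

lemma self_real: "b x x = of_real (Re (b x x))"
  using hermitian[of x x] by (simp add: complex_eq_iff)

lemma self_scale: "Re (b (scale a x) (scale a x)) = (cmod a)\<^sup>2 * Re (b x x)"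
proof -
  have "cnj a * a = of_real ((cmod a)\<^sup>2)"
    by (metis complex_norm_square mult.commute)
  then have "b (scale a x) (scale a x) = of_real ((cmod a)\<^sup>2) * of_real (Re (b x x))"
    by (subst self_real[symmetric]) (simp add: scale_left scale_right)
  then show ?thesis by simp
qed

lemma cauchy_schwarz: "(cmod (b x z))\<^sup>2 \<le> Re (b x x) * Re (b z z)"
proof (rule quadratic_nonneg_imp_le[OF _ nonneg])
  fix r :: real
  define c where "c = - of_real r * b x z"
  have "b (x + scale c z) (x + scale c z) = b x x + cnj c * b x z + c * cnj (b x z) + c * cnj c * b z z"
    using hermitian[of z x] by (simp add: add_left add_right scale_left scale_right algebra_simps)
  also have "Re \<dots> = Re (b x x) - 2 * r * (cmod (b x z))\<^sup>2 + r\<^sup>2 * (cmod (b x z))\<^sup>2 * Re (b z z)"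
    by (subst (1 2) self_real) (simp add: c_def cmod_power2[unfolded power2_eq_square] power2_eq_square algebra_simps)
  finally show "0 \<le> Re (b x x) - 2 * r * (cmod (b x z))\<^sup>2 + r\<^sup>2 * (cmod (b x z))\<^sup>2 * Re (b z z)"
    using nonneg by metis
qed

lemma null_left: "Re (b x x) = 0 \<Longrightarrow> b x z = 0"
  using cauchy_schwarz[of x z] by simp

lemma triangle: "sqrt (Re (b (x + z) (x + z))) \<le> sqrt (Re (b x x)) + sqrt (Re (b z z))"
proof -
  have "Re (b x z) \<le> cmod (b x z)" by (rule complex_Re_le_cmod)
  also have "\<dots> \<le> sqrt (Re (b x x) * Re (b z z))"
    using cauchy_schwarz by (simp add: real_le_rsqrt)
  finally have "Re (b (x + z) (x + z)) \<le> (sqrt (Re (b x x)) + sqrt (Re (b z z)))\<^sup>2"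
    using hermitian[of z x] nonneg[of x] nonneg[of z]
    by (simp add: add_left add_right power2_sum real_sqrt_mult)
  then show ?thesis by (simp add: real_le_lsqrt nonneg)
qed

lemma triangle_sum:
  assumes "finite F"
  shows "sqrt (Re (b (\<Sum>g\<in>F. scale (v g) g) (\<Sum>g\<in>F. scale (v g) g))) \<le> (\<Sum>g\<in>F. cmod (v g) * sqrt (Re (b g g)))"
  using assms
proof (induction F rule: finite_induct)
  case (insert g F)
  have "sqrt (Re (b (scale (v g) g) (scale (v g) g))) = cmod (v g) * sqrt (Re (b g g))"
    by (simp add: self_scale real_sqrt_mult)
  then show ?case
    using insert triangle[of "scale (v g) g" "\<Sum>g\<in>F. scale (v g) g"] by simp
qed (simp add: zero_left)

end

section \<open>Hilbert C(X)-modules and their fibres\<close>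

lemma cx_const [simp]: "cx (\<lambda>t. c)"
  by (simp add: cx_def)

lemma cx_diff: "cx a \<Longrightarrow> cx b \<Longrightarrow> cx (\<lambda>t. a t - b t)"
  by (simp add: cx_def continuous_on_diff)

lemma std_nt_frame_sums:
  assumes "std_nt_frame ip J y"
  shows "(\<lambda>j. if j \<in> J then ip x (y j) s * ip (y j) x s else 0) sums ip x x s"
proof -
  have "uniform_limit UNIV (\<lambda>n t. \<Sum>j\<in>J \<inter> {..<n}. ip x (y j) t * ip (y j) x t) (ip x x) sequentially"
    using assms unfolding std_nt_frame_def by blast
  from tendsto_uniform_limitI[OF this, of s]
  have "(\<lambda>n. \<Sum>j\<in>J \<inter> {..<n}. ip x (y j) s * ip (y j) x s) \<longlonglongrightarrow> ip x x s"
    by simp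
  moreover have "(\<Sum>j\<in>J \<inter> {..<n}. ip x (y j) s * ip (y j) x s)
      = (\<Sum>j<n. if j \<in> J then ip x (y j) s * ip (y j) x s else 0)" for n
    by (simp add: sum.inter_restrict[symmetric] Int_commute)
  ultimately show ?thesis
    unfolding sums_def by simp
qed

locale hilbert_cx =
  fixes sm :: "('x::topological_space \<Rightarrow> complex) \<Rightarrow> 'h::ab_group_add \<Rightarrow> 'h"
    and ip :: "'h \<Rightarrow> 'h \<Rightarrow> 'x \<Rightarrow> complex"
  assumes hilbert_module: "hilbert_CX_module sm ip"
begin

lemma sm_add_right: "cx a \<Longrightarrow> sm a (x + y) = sm a x + sm a y"
  using hilbert_module unfolding hilbert_CX_module_def by meson

lemma sm_add_left: "cx a \<Longrightarrow> cx b \<Longrightarrow> sm (\<lambda>t. a t + b t) x = sm a x + sm b x"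
  using hilbert_module unfolding hilbert_CX_module_def by meson

lemma sm_mult: "cx a \<Longrightarrow> cx b \<Longrightarrow> sm (\<lambda>t. a t * b t) x = sm a (sm b x)"
  using hilbert_module unfolding hilbert_CX_module_def by meson

lemma sm_one: "sm (\<lambda>t. 1) x = x"
  using hilbert_module unfolding hilbert_CX_module_def by meson

lemma ip_continuous: "cx (ip x y)"
  using hilbert_module unfolding hilbert_CX_module_def by meson

lemma ip_sm_left: "cx a \<Longrightarrow> ip (sm a x) y t = a t * ip x y t"
  using hilbert_module unfolding hilbert_CX_module_def by (meson fun_cong)

lemma ip_add_left: "ip (x + z) y t = ip x y t + ip z y t"
  using hilbert_module unfolding hilbert_CX_module_def by (meson fun_cong)

lemma ip_hermitian: "ip x y t = cnj (ip y x t)"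
  using hilbert_module unfolding hilbert_CX_module_def by meson

lemma ip_self_nonneg: "0 \<le> Re (ip x x t)"
  using hilbert_module unfolding hilbert_CX_module_def by meson

lemma ip_self_eq_zeroD: "ip x x = (\<lambda>t. 0) \<Longrightarrow> x = 0"
  using hilbert_module unfolding hilbert_CX_module_def by meson

lemma ip_complete:
  fixes s :: "nat \<Rightarrow> 'h"
  assumes "\<forall>e>0. \<exists>N. \<forall>m\<ge>N. \<forall>n\<ge>N. \<forall>t. norm (ip (s m - s n) (s m - s n) t) < e"
  shows "\<exists>l. \<forall>e>0. \<exists>N. \<forall>n\<ge>N. \<forall>t. norm (ip (s n - l) (s n - l) t) < e"
proof -
  have "\<forall>s::nat \<Rightarrow> 'h. (\<forall>e>0. \<exists>N. \<forall>m\<ge>N. \<forall>n\<ge>N. \<forall>t. norm (ip (s m - s n) (s m - s n) t) < e) \<longrightarrow>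
      (\<exists>l. \<forall>e>0. \<exists>N. \<forall>n\<ge>N. \<forall>t. norm (ip (s n - l) (s n - l) t) < e)"
    using hilbert_module unfolding hilbert_CX_module_def by (elim conjE) assumption
  then show ?thesis using assms by blast
qed

lemma sm_diff_left: "cx a \<Longrightarrow> cx b \<Longrightarrow> sm (\<lambda>t. a t - b t) x = sm a x - sm b x"
  using sm_add_left[of b "\<lambda>t. a t - b t" x] cx_diff[of a b] by (simp add: eq_diff_eq')

definition cscale :: "complex \<Rightarrow> 'h \<Rightarrow> 'h" where
  "cscale a x = sm (\<lambda>t. a) x"

definition sqnorm :: "'h \<Rightarrow> 'x \<Rightarrow> real" where
  "sqnorm x t = Re (ip x x t)"

lemma ip_cscale_left: "ip (cscale a x) y t = a * ip x y t"
  by (simp add: cscale_def ip_sm_left)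

sublocale fibre: hermitian_form cscale "\<lambda>u v. ip u v t" for t
  by unfold_locales (auto simp: ip_add_left ip_cscale_left ip_self_nonneg intro: ip_hermitian)

sublocale cvs: vector_space cscale
proof
  show "cscale a (x + y) = cscale a x + cscale a y" for a x y
    by (simp add: cscale_def sm_add_right)
  show "cscale (a + b) x = cscale a x + cscale b x" for a b x
    using sm_add_left[of "\<lambda>t. a" "\<lambda>t. b" x] by (simp add: cscale_def)
  show "cscale a (cscale b x) = cscale (a * b) x" for a b x
    using sm_mult[of "\<lambda>t. a" "\<lambda>t. b" x] by (simp add: cscale_def)
  show "cscale 1 x = x" for x
    by (simp add: cscale_def sm_one)
qed

lemma ip_zero_left [simp]: "ip 0 y t = 0"
  by (rule fibre.zero_left)

lemma ip_diff_left: "ip (x - z) y t = ip x y t - ip z y t"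
  by (metis add_diff_cancel diff_add_cancel ip_add_left)

lemma ip_sum_left: "ip (\<Sum>g\<in>S. f g) y t = (\<Sum>g\<in>S. ip (f g) y t)"
  by (induction S rule: infinite_finite_induct) (auto simp: ip_add_left)

lemma ip_self: "ip x x t = of_real (sqnorm x t)"
  unfolding sqnorm_def by (rule fibre.self_real)

lemma sqnorm_nonneg: "0 \<le> sqnorm x t"
  by (simp add: sqnorm_def ip_self_nonneg)

lemma sqnorm_cscale: "sqnorm (cscale a x) t = (cmod a)\<^sup>2 * sqnorm x t"
  unfolding sqnorm_def by (rule fibre.self_scale)

lemma sqnorm_eqI:
  assumes "\<And>z. ip x z t = ip x' z t"
  shows "sqnorm x t = sqnorm x' t"
proof -
  have "ip x x t = ip x' x t" by (rule assms)
  also have "\<dots> = cnj (ip x x' t)" by (rule ip_hermitian)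
  also have "\<dots> = cnj (ip x' x' t)" by (simp only: assms)
  also have "\<dots> = ip x' x' t" by (rule ip_hermitian[symmetric])
  finally show ?thesis unfolding sqnorm_def by simp
qed

lemma sqnorm_sm: "cx a \<Longrightarrow> sqnorm (sm a x) t = (cmod (a t))\<^sup>2 * sqnorm x t"
  using sqnorm_eqI[of "sm a x" t "cscale (a t) x"]
  by (simp add: ip_sm_left ip_cscale_left sqnorm_cscale)

definition orthonormal_at :: "'x \<Rightarrow> (nat \<Rightarrow> 'h) \<Rightarrow> nat \<Rightarrow> bool" where
  "orthonormal_at s e M \<longleftrightarrow> (\<forall>i<M. \<forall>j<M. ip (e i) (e j) s = (if i = j then 1 else 0))"

lemma orthonormal_at_cong:
  assumes "orthonormal_at s e M" and "\<And>i z. i < M \<Longrightarrow> ip (e i) z s = ip (e' i) z s"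
  shows "orthonormal_at s e' M"
  unfolding orthonormal_at_def
proof (intro allI impI)
  fix i j assume "i < M" "j < M"
  then have "ip (e' i) (e' j) s = ip (e i) (e' j) s" by (simp add: assms(2))
  also have "\<dots> = cnj (ip (e' j) (e i) s)" by (rule ip_hermitian)
  also have "\<dots> = cnj (ip (e j) (e i) s)" using \<open>j < M\<close> by (simp only: assms(2))
  also have "\<dots> = (if i = j then 1 else 0)"
    using assms(1) \<open>i < M\<close> \<open>j < M\<close> unfolding orthonormal_at_def by simp
  finally show "ip (e' i) (e' j) s = (if i = j then 1 else 0)" .
qed

lemma orthonormal_at_independent:
  assumes on: "orthonormal_at s e M"
  shows "inj_on e {..<M}" and "cvs.independent (e ` {..<M})"
proof -
  have on_iff: "ip (e i) (e j) s = (if i = j then 1 else 0)" if "i < M" "j < M" for i j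
    using on that unfolding orthonormal_at_def by blast
  show "inj_on e {..<M}"
    by (rule inj_onI) (metis lessThan_iff on_iff zero_neq_one)
  show "cvs.independent (e ` {..<M})"
  proof
    assume "cvs.dependent (e ` {..<M})"
    then obtain k where k: "k < M" "e k \<in> cvs.span (e ` {..<M} - {e k})"
      unfolding cvs.dependent_def by blast
    have "cvs.subspace {u. ip u (e k) s = 0}"
      unfolding cvs.subspace_def by (auto simp: ip_add_left ip_cscale_left)
    moreover have "e ` {..<M} - {e k} \<subseteq> {u. ip u (e k) s = 0}"
      using on_iff k(1) by auto
    ultimately have "ip (e k) (e k) s = 0"
      using k(2) cvs.span_minimal by blast
    then show False using on_iff[OF k(1) k(1)] by simp
  qed
qed

lemma orthonormal_at_extend:
  assumes "orthonormal_at s e M" and "sqnorm p s = 1" and "\<And>k. k < M \<Longrightarrow> ip p (e k) s = 0"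
  shows "orthonormal_at s (e(M := p)) (Suc M)"
  using assms ip_hermitian[of "e k" p s for k] ip_self[of p s]
  unfolding orthonormal_at_def by (auto simp: less_Suc_eq)

lemma sqnorm_continuous: "continuous_on UNIV (sqnorm x)"
  using ip_continuous[of x x] unfolding cx_def sqnorm_def by (intro continuous_intros)

lemma ip_mult_ip_swap: "ip u w s * ip w u s = of_real ((cmod (ip u w s))\<^sup>2)"
  using complex_norm_square[of "ip u w s"] ip_hermitian[of w u s] by simp

lemma frame_partial_sum_le:
  assumes "std_nt_frame ip J y"
  shows "Re (\<Sum>j\<in>J \<inter> {..<N}. ip u (y j) s * ip (y j) u s) \<le> sqnorm u s"
proof -
  define t where "t j = (if j \<in> J then (cmod (ip u (y j) s))\<^sup>2 else 0)" for j
  have "(\<lambda>j. Re (if j \<in> J then ip u (y j) s * ip (y j) u s else 0)) sums Re (ip u u s)"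
    using std_nt_frame_sums[OF assms] by (rule sums_Re)
  moreover have "(\<lambda>j. Re (if j \<in> J then ip u (y j) s * ip (y j) u s else 0)) = t"
    unfolding t_def by (auto simp: ip_mult_ip_swap)
  ultimately have t: "t sums sqnorm u s"
    unfolding sqnorm_def by simp
  then have "sum t {..<N} \<le> suminf t"
    by (intro sum_le_suminf) (auto simp: sums_summable t_def)
  then have "sum t {..<N} \<le> sqnorm u s"
    using t by (simp add: sums_unique[symmetric])
  moreover have "sum t {..<N} = Re (\<Sum>j\<in>J \<inter> {..<N}. ip u (y j) s * ip (y j) u s)"
    unfolding t_def by (simp add: ip_mult_ip_swap sum.inter_restrict[symmetric] Int_commute)
  ultimately show ?thesis by simp
qed

definition frame_rem :: "nat set \<Rightarrow> (nat \<Rightarrow> 'h) \<Rightarrow> nat \<Rightarrow> 'x \<Rightarrow> 'h \<Rightarrow> 'h \<Rightarrow> complex" where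
  "frame_rem J y N s u v = ip u v s - (\<Sum>j\<in>J \<inter> {..<N}. ip u (y j) s * ip (y j) v s)"

lemma frame_rem_hermitian_form:
  assumes "std_nt_frame ip J y"
  shows "hermitian_form cscale (frame_rem J y N s)"
proof
  show "frame_rem J y N s (u + v) w = frame_rem J y N s u w + frame_rem J y N s v w" for u v w
    unfolding frame_rem_def by (simp add: ip_add_left distrib_right sum.distrib)
  show "frame_rem J y N s (cscale a u) w = a * frame_rem J y N s u w" for a u w
    unfolding frame_rem_def by (simp add: ip_cscale_left right_diff_distrib sum_distrib_left mult.assoc)
  show "frame_rem J y N s u w = cnj (frame_rem J y N s w u)" for u w
    unfolding frame_rem_def
    by (simp add: ip_hermitian[of u w s] ip_hermitian[of u "y j" s for j]
        ip_hermitian[of "y j" w s for j] mult.commute)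
  show "0 \<le> Re (frame_rem J y N s u u)" for u
    using frame_partial_sum_le[OF assms] by (simp add: frame_rem_def sqnorm_def)
qed

lemma frame_rem_le_sqnorm: "Re (frame_rem J y N s u u) \<le> sqnorm u s"
  by (simp add: frame_rem_def sqnorm_def ip_mult_ip_swap sum_nonneg)

end

locale fg_hilbert_cx = hilbert_cx sm ip
  for sm :: "('x::topological_space \<Rightarrow> complex) \<Rightarrow> 'h::ab_group_add \<Rightarrow> 'h"
    and ip :: "'h \<Rightarrow> 'h \<Rightarrow> 'x \<Rightarrow> complex" +
  fixes G :: "'h set"
  assumes finite_G: "finite G"
    and generated: "\<And>x. \<exists>c. (\<forall>g\<in>G. cx (c g)) \<and> x = (\<Sum>g\<in>G. sm (c g) g)"
begin

lemma ip_eq_const_lincomb_at: "\<exists>v. \<forall>z. ip x z s = ip (\<Sum>g\<in>G. cscale (v g) g) z s"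
proof -
  obtain c where c: "\<forall>g\<in>G. cx (c g)" "x = (\<Sum>g\<in>G. sm (c g) g)"
    using generated by blast
  show ?thesis
  proof (intro exI allI)
    show "ip x z s = ip (\<Sum>g\<in>G. cscale (c g s) g) z s" for z
      using c by (simp add: ip_sum_left ip_sm_left ip_cscale_left)
  qed
qed

lemma orthonormal_at_le_card:
  assumes "orthonormal_at s e M"
  shows "M \<le> card G"
proof -
  \<comment> \<open>At s, each e i agrees with a constant-coefficient combination of G, which lies in the span of G.\<close>
  have "\<exists>v. \<forall>i. \<forall>z. ip (e i) z s = ip (\<Sum>g\<in>G. cscale (v i g) g) z s"
    by (rule choice) (use ip_eq_const_lincomb_at in blast)
  then obtain v where v: "\<And>i z. ip (e i) z s = ip (\<Sum>g\<in>G. cscale (v i g) g) z s"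
    by blast
  define e' where "e' i = (\<Sum>g\<in>G. cscale (v i g) g)" for i
  have on': "orthonormal_at s e' M"
    using assms by (rule orthonormal_at_cong) (simp add: v e'_def)
  have "e' ` {..<M} \<subseteq> cvs.span G"
    unfolding e'_def by (intro image_subsetI cvs.span_sum cvs.span_scale cvs.span_base)
  then have "card (e' ` {..<M}) \<le> card G"
    using cvs.independent_span_bound[OF finite_G orthonormal_at_independent(2)[OF on']] by blast
  then show ?thesis
    using orthonormal_at_independent(1)[OF on'] by (simp add: card_image)
qed

text \<open>The dimension of the fibre of H at s, i.e. of H modulo the null vectors of the form at s.\<close>

definition fibre_dim :: "'x \<Rightarrow> nat" where
  "fibre_dim s = (GREATEST M. \<exists>e. orthonormal_at s e M)"

lemma fibre_dim_orthonormal: "\<exists>e. orthonormal_at s e (fibre_dim s)"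
  unfolding fibre_dim_def
  by (rule GreatestI_nat[where k=0 and b="card G"]) (auto simp: orthonormal_at_def intro: orthonormal_at_le_card)

lemma fibre_dim_maximal: "orthonormal_at s e M \<Longrightarrow> M \<le> fibre_dim s"
  unfolding fibre_dim_def
  by (rule Greatest_le_nat[where b="card G"]) (auto intro: orthonormal_at_le_card)

lemma fibre_dim_le_card: "fibre_dim s \<le> card G"
  using fibre_dim_orthonormal orthonormal_at_le_card by blast

lemma parseval_at:
  assumes on: "orthonormal_at s e (fibre_dim s)"
  shows "ip x z s = (\<Sum>i<fibre_dim s. ip x (e i) s * ip (e i) z s)"
proof -
  define M where "M = fibre_dim s"
  define p where "p = x - (\<Sum>i<M. cscale (ip x (e i) s) (e i))"
  have p_orth: "ip p (e k) s = 0" if "k < M" for k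
  proof -
    have "(\<Sum>i<M. ip x (e i) s * ip (e i) (e k) s) = (\<Sum>i<M. if i = k then ip x (e k) s else 0)"
      using on that unfolding orthonormal_at_def M_def by (intro sum.cong) auto
    also have "\<dots> = ip x (e k) s"
      using that by simp
    finally have "(\<Sum>i<M. ip x (e i) s * ip (e i) (e k) s) = ip x (e k) s" .
    then show ?thesis
      unfolding p_def by (simp add: ip_diff_left ip_sum_left ip_cscale_left)
  qed
  have "sqnorm p s = 0"
  proof (rule ccontr)
    assume "sqnorm p s \<noteq> 0"
    then have pos: "sqnorm p s > 0" using sqnorm_nonneg[of p s] by simp
    define p' where "p' = cscale (of_real (1 / sqrt (sqnorm p s))) p"
    have "sqnorm p' s = 1"
      using pos by (simp add: p'_def sqnorm_cscale norm_divide power_divide)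
    moreover have "ip p' (e k) s = 0" if "k < M" for k
      using p_orth[OF that] by (simp add: p'_def ip_cscale_left)
    ultimately have "orthonormal_at s (e(M := p')) (Suc M)"
      using on unfolding M_def by (intro orthonormal_at_extend) auto
    then show False
      using fibre_dim_maximal unfolding M_def by fastforce
  qed
  then have "ip p z s = 0"
    unfolding sqnorm_def by (rule fibre.null_left)
  have x_eq: "p + (\<Sum>i<M. cscale (ip x (e i) s) (e i)) = x"
    unfolding p_def by simp
  have "ip x z s = ip (p + (\<Sum>i<M. cscale (ip x (e i) s) (e i))) z s"
    by (simp only: x_eq)
  also have "\<dots> = ip p z s + (\<Sum>i<M. ip x (e i) s * ip (e i) z s)"
    by (simp only: ip_add_left ip_sum_left ip_cscale_left)
  finally show ?thesis
    using \<open>ip p z s = 0\<close> unfolding M_def by simp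
qed

lemma frame_sums_fibre_dim:
  assumes "std_nt_frame ip J y"
  shows "(\<lambda>j. if j \<in> J then ip (y j) (y j) s else 0) sums of_nat (fibre_dim s)"
proof -
  obtain e where on: "orthonormal_at s e (fibre_dim s)"
    using fibre_dim_orthonormal by blast
  have "(\<lambda>j. \<Sum>i<fibre_dim s. if j \<in> J then ip (e i) (y j) s * ip (y j) (e i) s else 0)
      sums (\<Sum>i<fibre_dim s. ip (e i) (e i) s)"
    by (intro sums_sum std_nt_frame_sums[OF assms])
  moreover have "(\<Sum>i<fibre_dim s. ip (e i) (e i) s) = of_nat (fibre_dim s)"
    using on unfolding orthonormal_at_def by simp
  moreover have "(\<Sum>i<fibre_dim s. if j \<in> J then ip (e i) (y j) s * ip (y j) (e i) s else 0)
      = (if j \<in> J then ip (y j) (y j) s else 0)" for j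
    using parseval_at[OF on, of "y j" "y j"] by (simp add: mult.commute)
  ultimately show ?thesis by simp
qed

lemma ip_const_lincomb_left: "ip (\<Sum>g\<in>G. cscale (v g) g) z s = (\<Sum>g\<in>G. v g * ip g z s)"
  by (simp add: ip_sum_left ip_cscale_left)

lemma fibre_dim_minus_partial_sum:
  assumes on: "orthonormal_at s e (fibre_dim s)"
  shows "of_nat (fibre_dim s) - (\<Sum>j\<in>J \<inter> {..<N}. ip (y j) (y j) s)
    = (\<Sum>i<fibre_dim s. frame_rem J y N s (e i) (e i))"
proof -
  have "(\<Sum>i<fibre_dim s. \<Sum>j\<in>J \<inter> {..<N}. ip (e i) (y j) s * ip (y j) (e i) s)
      = (\<Sum>j\<in>J \<inter> {..<N}. \<Sum>i<fibre_dim s. ip (y j) (e i) s * ip (e i) (y j) s)"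
    by (subst sum.swap) (simp add: mult.commute)
  also have "\<dots> = (\<Sum>j\<in>J \<inter> {..<N}. ip (y j) (y j) s)"
    by (intro sum.cong refl) (rule parseval_at[OF on, symmetric])
  moreover have "(\<Sum>i<fibre_dim s. ip (e i) (e i) s) = of_nat (fibre_dim s)"
    using on unfolding orthonormal_at_def by simp
  ultimately show ?thesis
    by (simp add: frame_rem_def sum_subtractf)
qed

text \<open>Such a K exists when X is compact (\<open>exists_const_approx_bound\<close>); its
  independence of s is what makes the partial sums of a frame converge uniformly to the fibre
  dimension.\<close>

definition const_approx_bound :: "real \<Rightarrow> bool" where
  "const_approx_bound K \<longleftrightarrow> 0 \<le> K \<and>
    (\<forall>u s \<delta>. sqnorm u s = 1 \<longrightarrow> 0 < \<delta> \<longrightarrow>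
      (\<exists>v. sqnorm (u - (\<Sum>g\<in>G. cscale (v g) g)) s < \<delta> \<and> (\<forall>g\<in>G. cmod (v g) \<le> K)))"

lemma frame_rem_unit_le:
  assumes fr: "std_nt_frame ip J y" and K: "const_approx_bound K" and u: "sqnorm u s = 1"
  shows "sqrt (Re (frame_rem J y N s u u)) \<le> K * (\<Sum>g\<in>G. sqrt (Re (frame_rem J y N s g g)))"
proof (rule field_le_epsilon)
  interpret rem: hermitian_form cscale "frame_rem J y N s"
    using fr by (rule frame_rem_hermitian_form)
  fix \<epsilon> :: real assume "0 < \<epsilon>"
  then have "0 < \<epsilon>\<^sup>2" by simp
  then obtain v where v: "sqnorm (u - (\<Sum>g\<in>G. cscale (v g) g)) s < \<epsilon>\<^sup>2" "\<forall>g\<in>G. cmod (v g) \<le> K"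
    using K u unfolding const_approx_bound_def by blast
  define w where "w = (\<Sum>g\<in>G. cscale (v g) g)"
  have "sqrt (Re (frame_rem J y N s u u)) \<le> sqrt (Re (frame_rem J y N s w w)) + sqrt (Re (frame_rem J y N s (u - w) (u - w)))"
    using rem.triangle[of w "u - w"] by simp
  also have "sqrt (Re (frame_rem J y N s w w)) \<le> (\<Sum>g\<in>G. cmod (v g) * sqrt (Re (frame_rem J y N s g g)))"
    unfolding w_def by (rule rem.triangle_sum[OF finite_G])
  also have "\<dots> \<le> K * (\<Sum>g\<in>G. sqrt (Re (frame_rem J y N s g g)))"
    unfolding sum_distrib_left using v(2) rem.nonneg by (intro sum_mono mult_right_mono) auto
  also have "sqrt (Re (frame_rem J y N s (u - w) (u - w))) \<le> sqrt (sqnorm (u - w) s)"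
    using frame_rem_le_sqnorm by simp
  also have "\<dots> < \<epsilon>"
    using real_sqrt_less_mono[OF v(1)] \<open>0 < \<epsilon>\<close> unfolding w_def by simp
  finally show "sqrt (Re (frame_rem J y N s u u)) \<le> K * (\<Sum>g\<in>G. sqrt (Re (frame_rem J y N s g g))) + \<epsilon>"
    by simp
qed

lemma frame_rem_uniformly_small:
  assumes fr: "std_nt_frame ip J y" and "0 < \<eta>"
  shows "\<forall>\<^sub>F N in sequentially. \<forall>g\<in>G. \<forall>s. Re (frame_rem J y N s g g) < \<eta>"
proof (rule eventually_ball_finite[OF finite_G], rule ballI)
  fix g
  have "uniform_limit UNIV (\<lambda>N t. \<Sum>j\<in>J \<inter> {..<N}. ip g (y j) t * ip (y j) g t) (ip g g) sequentially"
    using fr unfolding std_nt_frame_def by blast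
  then have "\<forall>\<^sub>F N in sequentially. \<forall>s. dist (\<Sum>j\<in>J \<inter> {..<N}. ip g (y j) s * ip (y j) g s) (ip g g s) < \<eta>"
    using \<open>0 < \<eta>\<close> unfolding uniform_limit_iff by simp
  then show "\<forall>\<^sub>F N in sequentially. \<forall>s. Re (frame_rem J y N s g g) < \<eta>"
  proof eventually_elim
    case (elim N)
    have "Re (frame_rem J y N s g g) \<le> dist (\<Sum>j\<in>J \<inter> {..<N}. ip g (y j) s * ip (y j) g s) (ip g g s)" for s
    proof -
      have "Re (frame_rem J y N s g g) \<le> cmod (frame_rem J y N s g g)"
        by (rule complex_Re_le_cmod)
      also have "\<dots> = dist (\<Sum>j\<in>J \<inter> {..<N}. ip g (y j) s * ip (y j) g s) (ip g g s)"
        unfolding frame_rem_def dist_norm by (rule norm_minus_commute)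
      finally show ?thesis .
    qed
    then show ?case
      using elim le_less_trans by blast
  qed
qed

lemma frame_rem_unit_le_small:
  assumes fr: "std_nt_frame ip J y" and K: "const_approx_bound K" and u: "sqnorm u s = 1"
    and small: "\<forall>g\<in>G. Re (frame_rem J y N s g g) \<le> \<eta>" and "0 \<le> \<eta>"
  shows "Re (frame_rem J y N s u u) \<le> K\<^sup>2 * (real (card G))\<^sup>2 * \<eta>"
proof -
  interpret rem: hermitian_form cscale "frame_rem J y N s"
    using fr by (rule frame_rem_hermitian_form)
  have "0 \<le> K"
    using K unfolding const_approx_bound_def by simp
  have "(\<Sum>g\<in>G. sqrt (Re (frame_rem J y N s g g))) \<le> (\<Sum>g\<in>G. sqrt \<eta>)"
    using small by (intro sum_mono) simp
  then have "K * (\<Sum>g\<in>G. sqrt (Re (frame_rem J y N s g g))) \<le> K * (real (card G) * sqrt \<eta>)"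
    using \<open>0 \<le> K\<close> by (intro mult_left_mono) simp_all
  with frame_rem_unit_le[OF fr K u]
  have "sqrt (Re (frame_rem J y N s u u)) \<le> K * (real (card G) * sqrt \<eta>)"
    by (rule order_trans)
  then have "(sqrt (Re (frame_rem J y N s u u)))\<^sup>2 \<le> (K * (real (card G) * sqrt \<eta>))\<^sup>2"
    by (rule power_mono) (simp add: rem.nonneg)
  then show ?thesis
    using rem.nonneg \<open>0 \<le> \<eta>\<close> by (simp add: power_mult_distrib)
qed

lemma partial_trace_error_le:
  assumes fr: "std_nt_frame ip J y" and K: "const_approx_bound K"
    and small: "\<forall>g\<in>G. Re (frame_rem J y N s g g) \<le> \<eta>" and "0 \<le> \<eta>"
  shows "cmod (of_nat (fibre_dim s) - (\<Sum>j\<in>J \<inter> {..<N}. ip (y j) (y j) s))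
    \<le> real (card G) ^ 3 * K\<^sup>2 * \<eta>"
proof -
  interpret rem: hermitian_form cscale "frame_rem J y N s"
    using fr by (rule frame_rem_hermitian_form)
  obtain e where on: "orthonormal_at s e (fibre_dim s)"
    using fibre_dim_orthonormal by blast
  have unit: "sqnorm (e i) s = 1" if "i < fibre_dim s" for i
    using on that unfolding orthonormal_at_def sqnorm_def by simp
  have "(\<Sum>i<fibre_dim s. frame_rem J y N s (e i) (e i))
      = of_real (\<Sum>i<fibre_dim s. Re (frame_rem J y N s (e i) (e i)))"
    by (subst rem.self_real) simp
  then have "cmod (of_nat (fibre_dim s) - (\<Sum>j\<in>J \<inter> {..<N}. ip (y j) (y j) s))
      = \<bar>\<Sum>i<fibre_dim s. Re (frame_rem J y N s (e i) (e i))\<bar>"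
    unfolding fibre_dim_minus_partial_sum[OF on] by (simp only: norm_of_real)
  also have "\<dots> = (\<Sum>i<fibre_dim s. Re (frame_rem J y N s (e i) (e i)))"
    by (simp add: sum_nonneg rem.nonneg)
  also have "\<dots> \<le> real (fibre_dim s) * (K\<^sup>2 * (real (card G))\<^sup>2 * \<eta>)"
    using sum_mono[of "{..<fibre_dim s}", OF frame_rem_unit_le_small[OF fr K unit small \<open>0 \<le> \<eta>\<close>]]
    by simp
  also have "\<dots> \<le> real (card G) * (K\<^sup>2 * (real (card G))\<^sup>2 * \<eta>)"
    using fibre_dim_le_card \<open>0 \<le> \<eta>\<close> by (intro mult_right_mono) auto
  finally show ?thesis
    by (simp add: power3_eq_cube power2_eq_square mult_ac)
qed

end

section \<open>Continuity of the fibre dimension\<close>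

lemma (in Metric_space) mcomplete_closure_interior_nonempty:
  assumes "mcomplete" and "M \<noteq> {}" and cover: "(\<Union>k::nat. A k) = M"
  shows "\<exists>k. mtopology interior_of (mtopology closure_of A k) \<noteq> {}"
proof (rule ccontr)
  assume "\<nexists>k. mtopology interior_of (mtopology closure_of A k) \<noteq> {}"
  then have "mtopology interior_of \<Union>(range (\<lambda>k. mtopology closure_of A k)) = {}"
    by (intro metric_Baire_category_alt[OF \<open>mcomplete\<close>]) auto
  moreover have "\<Union>(range (\<lambda>k. mtopology closure_of A k)) = M"
  proof
    show "\<Union>(range (\<lambda>k. mtopology closure_of A k)) \<subseteq> M"
      by (rule UN_least) (metis closure_of_subset_topspace topspace_mtopology)
    show "M \<subseteq> \<Union>(range (\<lambda>k. mtopology closure_of A k))"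
    proof
      fix x assume "x \<in> M"
      then obtain k where "x \<in> A k"
        using cover by blast
      moreover have "A k \<subseteq> mtopology closure_of A k"
        using cover by (intro closure_of_subset) auto
      ultimately show "x \<in> \<Union>(range (\<lambda>k. mtopology closure_of A k))"
        by blast
    qed
  qed
  ultimately show False
    using \<open>M \<noteq> {}\<close> interior_of_topspace[of mtopology] by simp
qed

lemma cx_bounded:
  assumes "compact (UNIV :: 'x::topological_space set)" and "cx (a :: 'x \<Rightarrow> complex)"
  shows "\<exists>k. \<forall>t. cmod (a t) \<le> k"
proof -
  have "bounded (range a)"
    using assms unfolding cx_def by (intro compact_imp_bounded compact_continuous_image)
  then show ?thesis
    unfolding bounded_iff by blast
qed

locale compact_fg_hilbert_cx = fg_hilbert_cx sm ip G
  for sm :: "('x::topological_space \<Rightarrow> complex) \<Rightarrow> 'h::ab_group_add \<Rightarrow> 'h"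
    and ip :: "'h \<Rightarrow> 'h \<Rightarrow> 'x \<Rightarrow> complex"
    and G :: "'h set" +
  assumes compact_UNIV: "compact (UNIV :: 'x set)"
begin

definition hnorm :: "'h \<Rightarrow> real" where
  "hnorm x = Sup (range (\<lambda>t. sqrt (sqnorm x t)))"

lemma sqrt_sqnorm_le_hnorm: "sqrt (sqnorm x t) \<le> hnorm x"
proof -
  obtain k where k: "\<And>t. cmod (ip x x t) \<le> k"
    using cx_bounded[OF compact_UNIV ip_continuous] by blast
  have "sqnorm x t \<le> k" for t
    unfolding sqnorm_def using complex_Re_le_cmod[of "ip x x t"] k[of t] by linarith
  then show ?thesis
    unfolding hnorm_def by (auto intro!: cSup_upper bdd_aboveI[of _ "sqrt k"])
qed

lemma hnorm_le: "(\<And>t. sqrt (sqnorm x t) \<le> r) \<Longrightarrow> hnorm x \<le> r"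
  unfolding hnorm_def by (rule cSup_least) auto

lemma hnorm_nonneg: "0 \<le> hnorm x"
  using sqrt_sqnorm_le_hnorm[of x undefined] real_sqrt_ge_zero[OF sqnorm_nonneg[of x undefined]]
  by linarith

lemma sqnorm_less_if_hnorm_less:
  assumes "hnorm x < r"
  shows "sqnorm x t < r\<^sup>2"
proof -
  have "sqrt (sqnorm x t) < r"
    using sqrt_sqnorm_le_hnorm[of x t] assms by linarith
  then have "(sqrt (sqnorm x t))\<^sup>2 < r\<^sup>2"
    by (rule power_strict_mono) (simp_all add: sqnorm_nonneg)
  then show ?thesis
    using sqnorm_nonneg[of x t] by simp
qed

lemma hnorm_le_if_sqnorm_le: "(\<And>t. sqnorm x t \<le> r\<^sup>2) \<Longrightarrow> 0 \<le> r \<Longrightarrow> hnorm x \<le> r"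
  by (rule hnorm_le) (simp add: real_le_lsqrt sqnorm_nonneg)

lemma hnorm_triangle: "hnorm (x + z) \<le> hnorm x + hnorm z"
proof (rule hnorm_le)
  fix t
  have "sqrt (sqnorm (x + z) t) \<le> sqrt (sqnorm x t) + sqrt (sqnorm z t)"
    unfolding sqnorm_def by (rule fibre.triangle)
  also have "\<dots> \<le> hnorm x + hnorm z"
    by (intro add_mono sqrt_sqnorm_le_hnorm)
  finally show "sqrt (sqnorm (x + z) t) \<le> hnorm x + hnorm z" .
qed

lemma hnorm_minus: "hnorm (- x) = hnorm x"
proof -
  have "sqnorm (- x) t = sqnorm x t" for t
    using sqnorm_cscale[of "-1" x t] by (simp add: cvs.scale_minus_left)
  then show ?thesis
    unfolding hnorm_def by simp
qed

lemma hnorm_eq_0_iff: "hnorm x = 0 \<longleftrightarrow> x = 0"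
proof
  assume "hnorm x = 0"
  then have "sqnorm x t = 0" for t
    using sqrt_sqnorm_le_hnorm[of x t] sqnorm_nonneg[of x t] by simp
  then show "x = 0"
    by (intro ip_self_eq_zeroD) (simp add: ip_self fun_eq_iff)
next
  assume "x = 0"
  then show "hnorm x = 0"
    using hnorm_nonneg[of x] by (intro antisym hnorm_le) (simp add: sqnorm_def)
qed

lemma hnorm_zero [simp]: "hnorm 0 = 0"
  by (simp add: hnorm_eq_0_iff)

lemma hnorm_metric: "Metric_space UNIV (\<lambda>x y. hnorm (x - y))"
proof
  show "0 \<le> hnorm (x - y)" for x y
    by (rule hnorm_nonneg)
  show "hnorm (x - y) = hnorm (y - x)" for x y
    by (metis hnorm_minus minus_diff_eq)
  show "hnorm (x - y) = 0 \<longleftrightarrow> x = y" for x y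
    by (simp add: hnorm_eq_0_iff)
  show "hnorm (x - z) \<le> hnorm (x - y) + hnorm (y - z)" for x y z
    using hnorm_triangle[of "x - y" "y - z"] by simp
qed

sublocale hmetric: Metric_space UNIV "\<lambda>x y. hnorm (x - y)"
  by (rule hnorm_metric)

lemma hnorm_complete: "hmetric.mcomplete"
  unfolding hmetric.mcomplete_def
proof (intro allI impI)
  fix \<sigma> :: "nat \<Rightarrow> 'h"
  assume "hmetric.MCauchy \<sigma>"
  then have cauchy: "\<exists>N. \<forall>m\<ge>N. \<forall>n\<ge>N. hnorm (\<sigma> m - \<sigma> n) < r" if "0 < r" for r
    unfolding hmetric.MCauchy_def using that by simp
  have "\<exists>N. \<forall>m\<ge>N. \<forall>n\<ge>N. \<forall>t. norm (ip (\<sigma> m - \<sigma> n) (\<sigma> m - \<sigma> n) t) < e" if e: "0 < e" for e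
  proof -
    obtain N where N: "\<forall>m\<ge>N. \<forall>n\<ge>N. hnorm (\<sigma> m - \<sigma> n) < sqrt e"
      using cauchy[of "sqrt e"] e by auto
    have "norm (ip (\<sigma> m - \<sigma> n) (\<sigma> m - \<sigma> n) t) < e" if "N \<le> m" "N \<le> n" for m n t
      using sqnorm_less_if_hnorm_less[of "\<sigma> m - \<sigma> n" "sqrt e" t] N that e
      by (simp add: ip_self sqnorm_nonneg)
    then show ?thesis by blast
  qed
  then obtain l where l: "\<exists>N. \<forall>n\<ge>N. \<forall>t. norm (ip (\<sigma> n - l) (\<sigma> n - l) t) < e" if "0 < e" for e
    using ip_complete by blast
  have "\<forall>\<^sub>F n in sequentially. hnorm (\<sigma> n - l) < \<epsilon>" if "0 < \<epsilon>" for \<epsilon>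
  proof -
    obtain N where N: "\<forall>n\<ge>N. \<forall>t. sqnorm (\<sigma> n - l) t < (\<epsilon> / 2)\<^sup>2"
      using l[of "(\<epsilon> / 2)\<^sup>2"] \<open>0 < \<epsilon>\<close> by (auto simp: ip_self sqnorm_nonneg)
    have "hnorm (\<sigma> n - l) \<le> \<epsilon> / 2" if "N \<le> n" for n
      using N that \<open>0 < \<epsilon>\<close> by (intro hnorm_le_if_sqnorm_le) (simp_all add: less_imp_le)
    then have "hnorm (\<sigma> n - l) < \<epsilon>" if "N \<le> n" for n
      using that \<open>0 < \<epsilon>\<close> by fastforce
    then show ?thesis
      unfolding eventually_sequentially by blast
  qed
  then show "\<exists>l. limitin hmetric.mtopology \<sigma> l sequentially"
    unfolding hmetric.limitin_metric by auto
qed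

definition lincomb :: "('h \<Rightarrow> 'x \<Rightarrow> complex) \<Rightarrow> 'h" where
  "lincomb c = (\<Sum>g\<in>G. sm (c g) g)"

definition bounded_coeffs :: "real \<Rightarrow> ('h \<Rightarrow> 'x \<Rightarrow> complex) set" where
  "bounded_coeffs r = {c. \<forall>g\<in>G. cx (c g) \<and> (\<forall>t. cmod (c g t) \<le> r)}"

lemma lincomb_bounded_coeffs_cover: "(\<Union>k::nat. lincomb ` bounded_coeffs (real k)) = UNIV"
proof -
  have "x \<in> (\<Union>k::nat. lincomb ` bounded_coeffs (real k))" for x
  proof -
    obtain c where c: "\<forall>g\<in>G. cx (c g)" "x = lincomb c"
      using generated unfolding lincomb_def by blast
    have "\<forall>g\<in>G. \<forall>\<^sub>F k in sequentially. \<forall>t. cmod (c g t) \<le> real k"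
    proof
      fix g assume "g \<in> G"
      then obtain b where b: "\<And>t. cmod (c g t) \<le> b"
        using c(1) cx_bounded[OF compact_UNIV] by blast
      show "\<forall>\<^sub>F k in sequentially. \<forall>t. cmod (c g t) \<le> real k"
        using eventually_ge_at_top[of "nat \<lceil>b\<rceil>"]
      proof eventually_elim
        case (elim k)
        then have "b \<le> real k" by linarith
        then show ?case using b order_trans by blast
      qed
    qed
    then have "\<forall>\<^sub>F k in sequentially. \<forall>g\<in>G. \<forall>t. cmod (c g t) \<le> real k"
      by (rule eventually_ball_finite[OF finite_G])
    then obtain k where "\<forall>g\<in>G. \<forall>t. cmod (c g t) \<le> real k"
      unfolding eventually_sequentially by blast
    then show ?thesis
      using c unfolding bounded_coeffs_def by blast
  qed
  then show ?thesis by blast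
qed

lemma lincomb_dense_in_some_ball:
  "\<exists>r x0 \<rho>. 0 < \<rho> \<and> (\<forall>x \<epsilon>. hnorm (x0 - x) < \<rho> \<longrightarrow> 0 < \<epsilon> \<longrightarrow>
     (\<exists>c\<in>bounded_coeffs r. hnorm (x - lincomb c) < \<epsilon>))"
proof -
  let ?S = "\<lambda>k::nat. hmetric.mtopology closure_of (lincomb ` bounded_coeffs (real k))"
  obtain k where "hmetric.mtopology interior_of ?S k \<noteq> {}"
    using hmetric.mcomplete_closure_interior_nonempty[OF hnorm_complete _ lincomb_bounded_coeffs_cover]
    by blast
  then obtain x0 where "x0 \<in> hmetric.mtopology interior_of ?S k"
    by blast
  then obtain \<rho> where \<rho>: "0 < \<rho>" "hmetric.mball x0 \<rho> \<subseteq> ?S k"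
    using openin_interior_of[of hmetric.mtopology "?S k"] interior_of_subset[of hmetric.mtopology "?S k"]
    unfolding hmetric.openin_mtopology by blast
  have "\<exists>c\<in>bounded_coeffs (real k). hnorm (x - lincomb c) < \<epsilon>"
    if x: "hnorm (x0 - x) < \<rho>" and \<epsilon>: "0 < \<epsilon>" for x \<epsilon>
  proof -
    have "x \<in> ?S k"
      using \<rho>(2) x by auto
    then obtain z where "z \<in> lincomb ` bounded_coeffs (real k)" "z \<in> hmetric.mball x \<epsilon>"
      using \<epsilon> unfolding hmetric.metric_closure_of by blast
    then show ?thesis by auto
  qed
  then show ?thesis
    using \<rho>(1) by blast
qed

lemma lincomb_diff:
  assumes "\<forall>g\<in>G. cx (c1 g)" and "\<forall>g\<in>G. cx (c2 g)"
  shows "lincomb (\<lambda>g t. c1 g t - c2 g t) = lincomb c1 - lincomb c2"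
  unfolding lincomb_def using assms by (simp add: sm_diff_left sum_subtractf)

lemma bounded_coeffs_diff:
  assumes "c1 \<in> bounded_coeffs r" and "c2 \<in> bounded_coeffs r"
  shows "(\<lambda>g t. c1 g t - c2 g t) \<in> bounded_coeffs (2 * r)"
  unfolding bounded_coeffs_def
proof (intro CollectI ballI conjI allI)
  fix g t assume g: "g \<in> G"
  show "cx (\<lambda>t. c1 g t - c2 g t)"
    using assms g unfolding bounded_coeffs_def by (auto intro: cx_diff)
  have "cmod (c1 g t) \<le> r" and "cmod (c2 g t) \<le> r"
    using assms g unfolding bounded_coeffs_def by blast+
  then show "cmod (c1 g t - c2 g t) \<le> 2 * r"
    using norm_triangle_ineq4[of "c1 g t" "c2 g t"] by linarith
qed

lemma lincomb_dense_near_zero: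
  "\<exists>r \<rho>. 0 \<le> r \<and> 0 < \<rho> \<and> (\<forall>x \<epsilon>. hnorm x < \<rho> \<longrightarrow> 0 < \<epsilon> \<longrightarrow>
     (\<exists>c\<in>bounded_coeffs r. hnorm (x - lincomb c) < \<epsilon>))"
proof -
  obtain r x0 \<rho> where \<rho>: "0 < \<rho>" and approx:
    "\<And>x \<epsilon>. hnorm (x0 - x) < \<rho> \<Longrightarrow> 0 < \<epsilon> \<Longrightarrow> \<exists>c\<in>bounded_coeffs r. hnorm (x - lincomb c) < \<epsilon>"
    using lincomb_dense_in_some_ball by blast
  have "\<exists>c\<in>bounded_coeffs (2 * max r 0). hnorm (x - lincomb c) < \<epsilon>"
    if x: "hnorm x < \<rho>" and \<epsilon>: "0 < \<epsilon>" for x \<epsilon>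
  proof -
    have "bounded_coeffs r \<subseteq> bounded_coeffs (max r 0)"
      unfolding bounded_coeffs_def by (auto simp: le_max_iff_disj)
    moreover obtain c1 where c1: "c1 \<in> bounded_coeffs r" "hnorm (x0 + x - lincomb c1) < \<epsilon> / 2"
      using approx[of "x0 + x" "\<epsilon> / 2"] x \<epsilon> by (auto simp: hnorm_minus)
    moreover obtain c2 where c2: "c2 \<in> bounded_coeffs r" "hnorm (x0 - lincomb c2) < \<epsilon> / 2"
      using approx[of x0 "\<epsilon> / 2"] \<rho> \<epsilon> by auto
    ultimately have c: "(\<lambda>g t. c1 g t - c2 g t) \<in> bounded_coeffs (2 * max r 0)"
      by (intro bounded_coeffs_diff) auto
    have "x - lincomb (\<lambda>g t. c1 g t - c2 g t) = (x0 + x - lincomb c1) + - (x0 - lincomb c2)"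
      using c1(1) c2(1) unfolding bounded_coeffs_def by (simp add: lincomb_diff)
    then have "hnorm (x - lincomb (\<lambda>g t. c1 g t - c2 g t)) \<le> hnorm (x0 + x - lincomb c1) + hnorm (x0 - lincomb c2)"
      using hnorm_triangle[of "x0 + x - lincomb c1" "- (x0 - lincomb c2)"] by (simp only: hnorm_minus)
    then have "hnorm (x - lincomb (\<lambda>g t. c1 g t - c2 g t)) < \<epsilon>"
      using c1(2) c2(2) by simp
    then show ?thesis
      using c by blast
  qed
  then show ?thesis
    using \<rho> by (intro exI[of _ "2 * max r 0"] exI[of _ \<rho>]) auto
qed

lemma cutoff_at:
  assumes "sqnorm u s = 1"
  shows "\<exists>a. cx a \<and> a s = 1 \<and> (\<forall>t. (cmod (a t))\<^sup>2 * sqnorm u t \<le> 1)"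
proof (intro exI conjI allI)
  let ?a = "\<lambda>t. complex_of_real (1 / max 1 (sqnorm u t))"
  show "cx ?a"
    unfolding cx_def by (intro continuous_intros sqnorm_continuous) auto
  show "?a s = 1"
    using assms by simp
  fix t
  have "sqnorm u t \<le> (max 1 (sqnorm u t))\<^sup>2"
    by (simp add: power2_eq_square le_max_iff_disj mult_le_cancel_left1 max_def)
  moreover have "cmod (?a t) = 1 / max 1 (sqnorm u t)"
    by (simp add: norm_divide)
  ultimately show "(cmod (?a t))\<^sup>2 * sqnorm u t \<le> 1"
    by (simp add: power_divide divide_le_eq)
qed

lemma ip_lincomb_left: "\<forall>g\<in>G. cx (c g) \<Longrightarrow> ip (lincomb c) z s = (\<Sum>g\<in>G. c g s * ip g z s)"
  unfolding lincomb_def by (simp add: ip_sum_left ip_sm_left)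

lemma sqnorm_sm_minus_lincomb_at:
  assumes a: "cx a" "a s \<noteq> 0" and c: "\<forall>g\<in>G. cx (c g)"
  shows "sqnorm (sm a u - lincomb c) s
    = (cmod (a s))\<^sup>2 * sqnorm (u - (\<Sum>g\<in>G. cscale (c g s / a s) g)) s"
proof -
  have "sqnorm (sm a u - lincomb c) s = sqnorm (cscale (a s) (u - (\<Sum>g\<in>G. cscale (c g s / a s) g))) s"
    using a c
    by (intro sqnorm_eqI) (simp add: ip_diff_left ip_sm_left ip_lincomb_left ip_cscale_left
        ip_const_lincomb_left right_diff_distrib sum_distrib_left)
  then show ?thesis
    by (simp add: sqnorm_cscale)
qed

lemma exists_const_approx_bound: "\<exists>K. const_approx_bound K"
proof -
  obtain r \<rho> where r: "0 \<le> r" and \<rho>: "0 < \<rho>" and approx: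
    "\<And>x \<epsilon>. hnorm x < \<rho> \<Longrightarrow> 0 < \<epsilon> \<Longrightarrow> \<exists>c\<in>bounded_coeffs r. hnorm (x - lincomb c) < \<epsilon>"
    using lincomb_dense_near_zero by blast
  define \<beta> where "\<beta> = \<rho> / 2"
  have \<beta>: "0 < \<beta>" "\<beta> < \<rho>"
    using \<rho> by (simp_all add: \<beta>_def)
  have "\<exists>v. sqnorm (u - (\<Sum>g\<in>G. cscale (v g) g)) s < \<delta> \<and> (\<forall>g\<in>G. cmod (v g) \<le> r / \<beta>)"
    if u: "sqnorm u s = 1" and \<delta>: "0 < \<delta>" for u s \<delta>
  proof -
    \<comment> \<open>Cut u off to norm at most \<beta> without changing it at s, approximate, evaluate at s.\<close>
    obtain a where a: "cx a" "a s = 1" "\<And>t. (cmod (a t))\<^sup>2 * sqnorm u t \<le> 1"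
      using cutoff_at[OF u] by blast
    have \<beta>a: "cx (\<lambda>t. \<beta> * a t)"
      using a(1) unfolding cx_def by (intro continuous_intros)
    then have "sqnorm (sm (\<lambda>t. \<beta> * a t) u) t = \<beta>\<^sup>2 * ((cmod (a t))\<^sup>2 * sqnorm u t)" for t
      using \<beta> by (simp add: sqnorm_sm norm_mult power_mult_distrib)
    then have "hnorm (sm (\<lambda>t. \<beta> * a t) u) \<le> \<beta>"
      using a(3) \<beta> by (intro hnorm_le_if_sqnorm_le) (simp_all add: mult_left_le)
    then obtain c where c: "c \<in> bounded_coeffs r" "hnorm (sm (\<lambda>t. \<beta> * a t) u - lincomb c) < \<beta> * sqrt \<delta>"
      using approx[of "sm (\<lambda>t. \<beta> * a t) u" "\<beta> * sqrt \<delta>"] \<beta> \<delta> by auto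
    then have "\<beta>\<^sup>2 * sqnorm (u - (\<Sum>g\<in>G. cscale (c g s / \<beta>) g)) s < (\<beta> * sqrt \<delta>)\<^sup>2"
      using sqnorm_sm_minus_lincomb_at[OF \<beta>a, of s c u] sqnorm_less_if_hnorm_less[OF c(2), of s] a(2) \<beta>
      unfolding bounded_coeffs_def by simp
    then have "sqnorm (u - (\<Sum>g\<in>G. cscale (c g s / \<beta>) g)) s < \<delta>"
      using \<beta> \<delta> by (simp add: power_mult_distrib)
    moreover have "cmod (c g s / \<beta>) \<le> r / \<beta>" if "g \<in> G" for g
      using c(1) that \<beta> unfolding bounded_coeffs_def by (simp add: norm_divide divide_right_mono)
    ultimately show ?thesis
      by (intro exI[of _ "\<lambda>g. c g s / \<beta>"]) auto
  qed
  then have "const_approx_bound (r / \<beta>)"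
    unfolding const_approx_bound_def using r \<beta> by simp
  then show ?thesis ..
qed

lemma frame_partial_sums_uniform:
  assumes fr: "std_nt_frame ip J y"
  shows "uniform_limit UNIV (\<lambda>N s. \<Sum>j\<in>J \<inter> {..<N}. ip (y j) (y j) s) (\<lambda>s. of_nat (fibre_dim s)) sequentially"
  unfolding uniform_limit_iff
proof (intro allI impI)
  fix \<epsilon> :: real assume "0 < \<epsilon>"
  obtain K where K: "const_approx_bound K"
    using exists_const_approx_bound by blast
  define C where "C = real (card G) ^ 3 * K\<^sup>2"
  have "0 \<le> C"
    unfolding C_def by simp
  define \<eta> where "\<eta> = \<epsilon> / (1 + C)"
  have "0 < \<eta>" and "C * \<eta> < \<epsilon>"
    using \<open>0 < \<epsilon>\<close> \<open>0 \<le> C\<close> by (simp_all add: \<eta>_def field_simps)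
  show "\<forall>\<^sub>F N in sequentially. \<forall>s\<in>UNIV. dist (\<Sum>j\<in>J \<inter> {..<N}. ip (y j) (y j) s) (of_nat (fibre_dim s)) < \<epsilon>"
    using frame_rem_uniformly_small[OF fr \<open>0 < \<eta>\<close>]
  proof eventually_elim
    case (elim N)
    have "dist (\<Sum>j\<in>J \<inter> {..<N}. ip (y j) (y j) s) (of_nat (fibre_dim s)) \<le> C * \<eta>" for s
      using partial_trace_error_le[OF fr K, of N s \<eta>] elim \<open>0 < \<eta>\<close>
      unfolding C_def by (simp add: dist_norm norm_minus_commute less_imp_le)
    then show ?case
      using \<open>C * \<eta> < \<epsilon>\<close> by (meson le_less_trans)
  qed
qed

lemma fibre_dim_continuous:
  assumes "std_nt_frame ip J y"
  shows "continuous_on UNIV (\<lambda>s. complex_of_nat (fibre_dim s))"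
proof (rule uniform_limit_theorem[OF _ frame_partial_sums_uniform[OF assms]])
  show "\<forall>\<^sub>F N in sequentially. continuous_on UNIV (\<lambda>s. \<Sum>j\<in>J \<inter> {..<N}. ip (y j) (y j) s)"
    using ip_continuous unfolding cx_def by (intro always_eventually allI continuous_on_sum) auto
qed simp

end

theorem proposition4p7:
  fixes sm :: "('x::t2_space \<Rightarrow> complex) \<Rightarrow> 'h::ab_group_add \<Rightarrow> 'h"
    and ip :: "'h \<Rightarrow> 'h \<Rightarrow> ('x \<Rightarrow> complex)"
  assumes "compact (UNIV :: 'x set)"
    and "hilbert_CX_module sm ip"
    and "finitely_generated_CX sm"
  shows "\<exists>f :: 'x \<Rightarrow> complex.
           continuous_on UNIV f \<and>
           (\<forall>t. f t \<in> \<nat>) \<and>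
           (\<forall>k::nat. open {t. f t = of_nat k} \<and> closed {t. f t = of_nat k}) \<and>
           (\<forall>J y. std_nt_frame ip J y \<longrightarrow>
              (\<forall>t. (\<lambda>j. if j \<in> J then ip (y j) (y j) t else 0) sums f t))"
proof -
  obtain G where "finite G" and "\<forall>x. \<exists>c. (\<forall>g\<in>G. cx (c g)) \<and> x = (\<Sum>g\<in>G. sm (c g) g)"
    using assms(3) unfolding finitely_generated_CX_def by blast
  then interpret compact_fg_hilbert_cx sm ip G
    using assms(1,2) by unfold_locales auto
  \<comment> \<open>Without any standard normalized tight frame the last clause is vacuous and 0 will do.\<close>
  define f :: "'x \<Rightarrow> complex"
    where "f = (if \<exists>J y. std_nt_frame ip J y then \<lambda>s. of_nat (fibre_dim s) else (\<lambda>_. 0))"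
  have nat: "\<forall>t. f t \<in> \<nat>"
    unfolding f_def by simp
  have cont: "continuous_on UNIV f"
    unfolding f_def using fibre_dim_continuous by auto
  have "\<forall>J y. std_nt_frame ip J y \<longrightarrow> (\<forall>t. (\<lambda>j. if j \<in> J then ip (y j) (y j) t else 0) sums f t)"
    unfolding f_def using frame_sums_fibre_dim by auto
  then show ?thesis
    using cont nat clopen_level_sets_of_nat_valued[OF cont] by blast
qed

end
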